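(* Let $m\ge 3$ and let $C_1,\dots,C_m\subset\mathbb{R}^n$ be nonempty, closed, convex sets in general position, $C=C_1\times\cdots\times C_m$, and $D(x)=\sum_{i=1}^m\|x_i-x_{i+1}\|$ with $x_{m+1}=x_1$. If $x=(x_1,\dots,x_m)\in C$ has at least one component $x_i\in\operatorname{int}(C_i)$, then there exists $\bar x=(\bar x_1,\dots,\bar x_m)$ with $\bar x_i\in\operatorname{bd}(C_i)$ for every $i=1,\dots,m$ (so in particular $\bar x\in\operatorname{bd}(C)$) such that $D(\bar x)<D(x)$.
   Context: The family of nonempty closed convex sets $C_1,\dots,C_m\subset\mathbb{R}^n$ is in general position if for every $i$, $C_i\cap K_i=\varnothing$, where $K_i=\operatorname{conv}\big(\bigcup_{j\ne i}C_j\big)$ is the convex hull of the union of the other sets. $\operatorname{int}$ and $\operatorname{bd}$ denote interior and boundary in $\mathbb{R}^n$ (resp. in $\mathbb{R}^{mn}$ for $C$). *)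

theory Defs
  imports "HOL-Analysis.Analysis"
begin

text \<open>Sets C 0, ..., C (m-1) (0-based indexing of C_1..C_m) are in general position:
  each C i is disjoint from the convex hull of the union of the others.\<close>
definition general_position :: "nat \<Rightarrow> (nat \<Rightarrow> 'a::euclidean_space set) \<Rightarrow> bool" where
  "general_position m C \<longleftrightarrow>
     (\<forall>i<m. C i \<inter> convex hull (\<Union>j\<in>{0..<m} - {i}. C j) = {})"

definition perimeter :: "nat \<Rightarrow> (nat \<Rightarrow> 'a::euclidean_space) \<Rightarrow> real" where
  "perimeter m x = (\<Sum>i<m. norm (x i - x ((i + 1) mod m)))"

end

theory Submission
  imports Defs
begin

(* If x k lies in the interior of C k, its two cyclic neighbours lie in the convex hull K of the
   other sets, hence so does the segment joining them, and this segment misses C k.  Walking from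
   x k towards its successor we leave C k at a frontier point y different from x k.  Moving x k to y
   shortens the edge to the successor by |x k - y| and lengthens the edge from the predecessor by
   strictly less: equality would put x k on the segment between the two neighbours, inside K.
   Each such move lowers both the perimeter and the number of interior vertices, so finitely many
   moves bring every vertex to the frontier. *)

lemma add_one_mod_neq_self:
  assumes "2 \<le> m"
  shows "(k + 1) mod m \<noteq> (k::nat)"
proof
  assume "(k + 1) mod m = k"
  moreover from this have "k < m"
    using assms mod_less_divisor[of m "k + 1"] by simp
  ultimately show False
    using assms by (cases "k + 1 = m") auto
qed

lemma inj_on_add_one_mod: "inj_on (\<lambda>i. (i + 1) mod m) {..<(m::nat)}"
  by (auto simp: inj_on_def mod_Suc split: if_splits)

lemma ex_cyclic_predecessor:
  assumes "k < (m::nat)"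
  obtains p where "p < m" "(p + 1) mod m = k"
proof (cases "k = 0")
  case True
  then show thesis using assms by (intro that[of "m - 1"]) auto
next
  case False
  then show thesis using assms by (intro that[of "k - 1"]) auto
qed

lemma perimeter_fun_upd:
  fixes x :: "nat \<Rightarrow> 'a::euclidean_space"
  assumes "2 \<le> m" "p < m" "(p + 1) mod m = k"
  defines "n \<equiv> (k + 1) mod m"
  shows "perimeter m (x(k := y)) - perimeter m x
    = (norm (x p - y) + norm (y - x n)) - (norm (x p - x k) + norm (x k - x n))"
proof -
  have "k < m" "p \<noteq> k" "n \<noteq> k"
    using assms add_one_mod_neq_self[of m p] add_one_mod_neq_self[of m k] by auto
  have edges_off_k: "(i + 1) mod m \<noteq> k" if "i < m" "i \<noteq> p" for i
    using inj_on_add_one_mod[of m] that assms(2,3) unfolding inj_on_def by (metis lessThan_iff)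
  have perimeter_split: "perimeter m z = norm (z k - z n) + norm (z p - z k)
      + (\<Sum>i\<in>{..<m} - {k, p}. norm (z i - z ((i + 1) mod m)))" for z :: "nat \<Rightarrow> 'a"
  proof -
    let ?e = "\<lambda>i. norm (z i - z ((i + 1) mod m))"
    have "perimeter m z = ?e k + sum ?e ({..<m} - {k})"
      unfolding perimeter_def using \<open>k < m\<close> by (intro sum.remove) auto
    also have "sum ?e ({..<m} - {k}) = ?e p + sum ?e ({..<m} - {k} - {p})"
      using assms(2) \<open>p \<noteq> k\<close> by (intro sum.remove) auto
    finally show ?thesis
      using assms(3) unfolding n_def by (simp add: Diff_insert2[symmetric])
  qed
  have "(\<Sum>i\<in>{..<m} - {k, p}. norm ((x(k := y)) i - (x(k := y)) ((i + 1) mod m)))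
      = (\<Sum>i\<in>{..<m} - {k, p}. norm (x i - x ((i + 1) mod m)))"
    using edges_off_k by (intro sum.cong) simp_all
  then show ?thesis
    using perimeter_split[of x] perimeter_split[of "x(k := y)"] \<open>n \<noteq> k\<close> \<open>p \<noteq> k\<close> by simp
qed

lemma closed_segment_extend:
  fixes a b y z :: "'a::real_vector"
  assumes "z \<in> closed_segment a y" "y \<in> closed_segment z b" "y \<noteq> z"
  shows "z \<in> closed_segment a b"
proof -
  obtain s where s: "0 \<le> s" "s \<le> 1" "z = (1 - s) *\<^sub>R a + s *\<^sub>R y"
    using assms(1) unfolding closed_segment_def by blast
  obtain t where t: "0 \<le> t" "t \<le> 1" "y = (1 - t) *\<^sub>R z + t *\<^sub>R b"
    using assms(2) unfolding closed_segment_def by blast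
  have "t \<noteq> 0"
    using t(3) assms(3) by auto
  define c where "c = 1 - s + s * t"
  have "c > 0"
    using s t \<open>t \<noteq> 0\<close> unfolding c_def
    by (smt (verit) mult_le_cancel_left1 mult_pos_pos)
  have "c *\<^sub>R z = (1 - s) *\<^sub>R a + (s * t) *\<^sub>R b"
  proof -
    have "z = (1 - s) *\<^sub>R a + (s * (1 - t)) *\<^sub>R z + (s * t) *\<^sub>R b"
      using s(3) t(3) by (simp add: algebra_simps)
    then show ?thesis unfolding c_def by (simp add: algebra_simps)
  qed
  define u where "u = s * t / c"
  have "1 - u = (1 - s) / c"
    using \<open>c > 0\<close> unfolding u_def c_def by (simp add: field_simps)
  have "z = (1 / c) *\<^sub>R (c *\<^sub>R z)"
    using \<open>c > 0\<close> by simp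
  also have "\<dots> = ((1 - s) / c) *\<^sub>R a + u *\<^sub>R b"
    unfolding \<open>c *\<^sub>R z = _\<close> u_def by (simp add: scaleR_add_right)
  finally have "z = (1 - u) *\<^sub>R a + u *\<^sub>R b"
    unfolding \<open>1 - u = _\<close> .
  moreover have "0 \<le> u" "u \<le> 1"
    using \<open>c > 0\<close> s t unfolding u_def c_def by (auto simp: field_simps)
  ultimately show ?thesis
    unfolding closed_segment_def by blast
qed

lemma shorter_path_via_frontier:
  fixes a b z :: "'a::euclidean_space"
  assumes "z \<in> interior S" "b \<notin> S" "z \<notin> closed_segment a b"
  obtains y where "y \<in> frontier S" "norm (a - y) + norm (y - b) < norm (a - z) + norm (z - b)"
proof -
  have "closed_segment z b \<inter> frontier S \<noteq> {}"
  proof (rule connected_Int_frontier)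
    show "closed_segment z b \<inter> S \<noteq> {}"
      using assms(1) interior_subset by blast
    show "closed_segment z b - S \<noteq> {}"
      using assms(2) by blast
  qed simp
  then obtain y where y: "y \<in> closed_segment z b" "y \<in> frontier S"
    by blast
  have "y \<noteq> z"
    using y(2) assms(1) by (auto simp: frontier_def)
  have "norm (z - b) = norm (z - y) + norm (y - b)"
    using y(1) between[of z b y] by (simp add: between_mem_segment dist_norm)
  moreover have "norm (a - y) < norm (a - z) + norm (z - y)"
  proof -
    have "norm (a - y) \<noteq> norm (a - z) + norm (z - y)"
    proof
      assume "norm (a - y) = norm (a - z) + norm (z - y)"
      then have "z \<in> closed_segment a y"
        using between[of a y z] by (simp add: between_mem_segment dist_norm)
      then show False
        using closed_segment_extend y(1) \<open>y \<noteq> z\<close> assms(3) by blast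
    qed
    then show ?thesis
      using norm_triangle_ineq[of "a - z" "z - y"] by simp
  qed
  ultimately show thesis
    using that y(2) by simp
qed

lemma perimeter_decreases_at_interior_vertex:
  fixes C :: "nat \<Rightarrow> 'a::euclidean_space set"
  assumes "2 \<le> m" "general_position m C" "\<forall>i<m. x i \<in> C i"
    and "k < m" "x k \<in> interior (C k)"
  obtains y where "y \<in> frontier (C k)" "perimeter m (x(k := y)) < perimeter m x"
proof -
  obtain p where p: "p < m" "(p + 1) mod m = k"
    using ex_cyclic_predecessor assms(4) by blast
  define n where "n = (k + 1) mod m"
  let ?K = "convex hull (\<Union>j\<in>{0..<m} - {k}. C j)"
  have disjoint: "C k \<inter> ?K = {}"
    using assms(2,4) unfolding general_position_def by blast
  have "p \<noteq> k" "n \<noteq> k" "n < m"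
    using p assms(1) add_one_mod_neq_self[of m p] add_one_mod_neq_self[of m k]
    unfolding n_def by auto
  moreover have "x j \<in> ?K" if "j < m" "j \<noteq> k" for j
    using that assms(3) by (intro hull_inc) auto
  ultimately have "x p \<in> ?K" "x n \<in> ?K"
    using p(1) by auto
  then have "closed_segment (x p) (x n) \<subseteq> ?K"
    by (simp add: closed_segment_subset)
  then have "x n \<notin> C k" "x k \<notin> closed_segment (x p) (x n)"
    using disjoint \<open>x n \<in> ?K\<close> assms(3,4) by auto
  then obtain y where "y \<in> frontier (C k)"
      and "norm (x p - y) + norm (y - x n) < norm (x p - x k) + norm (x k - x n)"
    using shorter_path_via_frontier assms(5) by blast
  moreover have "perimeter m (x(k := y)) - perimeter m x
      = (norm (x p - y) + norm (y - x n)) - (norm (x p - x k) + norm (x k - x n))"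
    using perimeter_fun_upd assms(1) p unfolding n_def by blast
  ultimately show thesis
    using that by simp
qed

lemma ex_frontier_configuration_perimeter_le:
  fixes C :: "nat \<Rightarrow> 'a::euclidean_space set"
  assumes "2 \<le> m" "\<forall>i<m. closed (C i)" "general_position m C" "\<forall>i<m. x i \<in> C i"
  shows "\<exists>xb. (\<forall>i<m. xb i \<in> frontier (C i)) \<and> perimeter m xb \<le> perimeter m x"
  using assms(4)
proof (induction "card {i. i < m \<and> x i \<in> interior (C i)}" arbitrary: x rule: less_induct)
  case less
  let ?I = "\<lambda>z. {i. i < m \<and> z i \<in> interior (C i)}"
  show ?case
  proof (cases "\<exists>k<m. x k \<in> interior (C k)")
    case False
    then have "\<forall>i<m. x i \<in> frontier (C i)"
      using less.prems assms(2) by (auto simp: frontier_def)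
    then show ?thesis
      by blast
  next
    case True
    then obtain k where k: "k < m" "x k \<in> interior (C k)"
      by blast
    obtain y where y: "y \<in> frontier (C k)" "perimeter m (x(k := y)) < perimeter m x"
      using perimeter_decreases_at_interior_vertex assms(1,3) less.prems k by blast
    have "y \<in> C k"
      using y(1) assms(2) k(1) frontier_subset_closed by blast
    have "y \<notin> interior (C k)"
      using y(1) by (auto simp: frontier_def)
    then have "?I (x(k := y)) = ?I x - {k}"
      by auto
    moreover have "card (?I x - {k}) < card (?I x)"
      using k by (intro card_Diff1_less) auto
    ultimately have "card (?I (x(k := y))) < card (?I x)"
      by simp
    moreover have "\<forall>i<m. (x(k := y)) i \<in> C i"
      using less.prems \<open>y \<in> C k\<close> by simp
    ultimately obtain xb where "\<forall>i<m. xb i \<in> frontier (C i)" "perimeter m xb \<le> perimeter m (x(k := y))"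
      using less.hyps by blast
    then show ?thesis
      using y(2) by (intro exI[of _ xb]) simp
  qed
qed

theorem mainTheorem2:
  fixes C :: "nat \<Rightarrow> 'a::euclidean_space set" and x :: "nat \<Rightarrow> 'a"
  assumes "m \<ge> 3"
    and "\<forall>i<m. C i \<noteq> {} \<and> closed (C i) \<and> convex (C i)"
    and "general_position m C"
    and "\<forall>i<m. x i \<in> C i"
    and "\<exists>i<m. x i \<in> interior (C i)"
  shows "\<exists>xb :: nat \<Rightarrow> 'a. (\<forall>i<m. xb i \<in> frontier (C i)) \<and> perimeter m xb < perimeter m x"
proof -
  have "2 \<le> m" and closed: "\<forall>i<m. closed (C i)"
    using assms(1,2) by auto
  obtain k where k: "k < m" "x k \<in> interior (C k)"
    using assms(5) by blast
  obtain y where y: "y \<in> frontier (C k)" "perimeter m (x(k := y)) < perimeter m x"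
    using perimeter_decreases_at_interior_vertex \<open>2 \<le> m\<close> assms(3,4) k by blast
  have "\<forall>i<m. (x(k := y)) i \<in> C i"
    using assms(4) y(1) closed k(1) frontier_subset_closed by auto
  then obtain xb where "\<forall>i<m. xb i \<in> frontier (C i)" "perimeter m xb \<le> perimeter m (x(k := y))"
    using ex_frontier_configuration_perimeter_le \<open>2 \<le> m\<close> closed assms(3) by blast
  then show ?thesis
    using y(2) by (intro exI[of _ xb]) simp
qed
end
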